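(* Let $\Omega=(0,L)^2$ with periodic boundary conditions, $M$ a positive integer, $h=L/M$, and let $\mathbb{V}_h\cong\mathbb{R}^{M^2}$ be the space of real grid functions on the periodic grid $\{(ih,jh):1\le i,j\le M\}$. Let $\Lambda_h$ be the standard five-point central-difference matrix of the Laplacian on this grid with periodic boundary conditions, and let $\varepsilon>0$. Let $0=t_0<t_1<\dots<t_N=T$ be a time grid with steps $\tau_k=t_k-t_{k-1}$, step ratios $r_k=\tau_k/\tau_{k-1}$ for $2\le k\le N$ and $r_1:=0$. Given $u^0\in\mathbb{V}_h$, consider the scheme $$D_2u^n=\varepsilon^2\Lambda_hu^n-f(u^n),\qquad n\ge1,$$ where $f(u)=u^{3}-u$ componentwise, $D_2u^1=(u^1-u^0)/\tau_1$ and, for $n\ge2$, $$D_2u^n=\frac{1+2r_n}{\tau_n(1+r_n)}(u^n-u^{n-1})-\frac{r_n^2}{\tau_n(1+r_n)}(u^{n-1}-u^{n-2}).$$ If $\tau_n<\frac{1+2r_n}{1+r_n}$ for $n\ge1$, then the scheme is uniquely solvable, i.e. for every $n\ge1$, given $u^0,\dots,u^{n-1}$ there exists a unique $u^n\in\mathbb{V}_h$ satisfying the $n$-th equation.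
   Context: $\Lambda_h$ is symmetric and negative semi-definite. Cubes and other nonlinear operations on vectors are taken componentwise. *)

theory Defs
  imports Complex_Main
begin

text \<open>Grid functions on the periodic M x M grid, indices (i,j) with 0 <= i,j < M
  (index i corresponds to the grid point (i+1)h, periodically). Values off the grid are
  fixed to 0, so the space below is isomorphic to R^(M^2).\<close>

type_synonym gridfun = "nat \<times> nat \<Rightarrow> real"

definition grid :: "nat \<Rightarrow> (nat \<times> nat) set" where
  "grid M = {0..<M} \<times> {0..<M}"

definition Vh :: "nat \<Rightarrow> gridfun set" where
  "Vh M = {u. \<forall>p. p \<notin> grid M \<longrightarrow> u p = 0}"

definition lap_h :: "nat \<Rightarrow> real \<Rightarrow> gridfun \<Rightarrow> gridfun" where
  "lap_h M h u = (\<lambda>(i,j). if i < M \<and> j < M then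
      (u ((i + 1) mod M, j) + u ((i + M - 1) mod M, j)
       + u (i, (j + 1) mod M) + u (i, (j + M - 1) mod M) - 4 * u (i, j)) / h\<^sup>2
     else 0)"

definition f_AC :: "real \<Rightarrow> real" where
  "f_AC x = x ^ 3 - x"

definition tau :: "(nat \<Rightarrow> real) \<Rightarrow> nat \<Rightarrow> real" where
  "tau t k = t k - t (k - 1)"

definition ratio :: "(nat \<Rightarrow> real) \<Rightarrow> nat \<Rightarrow> real" where
  "ratio t k = (if k \<le> 1 then 0 else tau t k / tau t (k - 1))"

definition D2 :: "(nat \<Rightarrow> real) \<Rightarrow> nat \<Rightarrow> gridfun \<Rightarrow> (nat \<Rightarrow> gridfun) \<Rightarrow> gridfun" where
  "D2 t n v us = (\<lambda>p.
     if n = 1 then (v p - us 0 p) / tau t 1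
     else (1 + 2 * ratio t n) / (tau t n * (1 + ratio t n)) * (v p - us (n - 1) p)
          - (ratio t n)\<^sup>2 / (tau t n * (1 + ratio t n)) * (us (n - 1) p - us (n - 2) p))"

end

theory Submission
  imports Defs "HOL-Probability.Discrete_Topology"
begin

text \<open>With \<open>a = (1 + 2 r\<^sub>n) / (\<tau>\<^sub>n (1 + r\<^sub>n))\<close> the leading BDF2 coefficient and
  \<open>k = \<epsilon>\<^sup>2 / h\<^sup>2\<close>, the \<open>n\<close>-th step is the grid system
  \<open>(a - 1 + 4 k) v + v\<^sup>3 = \<beta> + k S v\<close>, where \<open>S\<close> sums the four periodic neighbours and
  \<open>\<beta>\<close> depends only on the previous steps. The step-size restriction says exactly \<open>a > 1\<close>,
  so \<open>C = a - 1 + 4 k > 4 k\<close>. The scalar map \<open>x \<mapsto> C x + x\<^sup>3\<close> is a bijection whose inverse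
  is \<open>1/C\<close>-Lipschitz, hence the system is the fixed-point equation
  \<open>v = (C \<cdot> + \<cdot>\<^sup>3)\<^sup>-\<^sup>1 (\<beta> + k S v)\<close>, whose right-hand side is a contraction with factor
  \<open>4 k / C < 1\<close> in the maximum norm. Banach's fixed-point theorem gives existence and
  uniqueness.\<close>

lemma bounded_sup_contraction_unique_fixpoint:
  fixes G :: "('a \<Rightarrow> 'b::complete_space) \<Rightarrow> 'a \<Rightarrow> 'b"
  assumes "0 \<le> q" "q < 1"
    and bounded: "\<And>u. bounded (range (G u))"
    and contraction:
      "\<And>u w d x. (\<And>y. dist (u y) (w y) \<le> d) \<Longrightarrow> dist (G u x) (G w x) \<le> q * d"
  shows "\<exists>!u. G u = u"
proof -
  \<comment> \<open>On \<open>'a discrete\<close> every function is continuous, so the bounded functions on \<open>'a\<close>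
    form the complete space \<open>'a discrete \<Rightarrow>\<^sub>C 'b\<close> with the supremum metric.\<close>
  define lift :: "('a \<Rightarrow> 'b) \<Rightarrow> 'a discrete \<Rightarrow>\<^sub>C 'b"
    where "lift u = Bcontfun (u \<circ> of_discrete)" for u
  define unlift :: "('a discrete \<Rightarrow>\<^sub>C 'b) \<Rightarrow> 'a \<Rightarrow> 'b"
    where "unlift f = apply_bcontfun f \<circ> discrete" for f
  have unlift_lift: "unlift (lift u) = u" if "bounded (range u)" for u
  proof -
    have "range (u \<circ> of_discrete) \<subseteq> range u" by auto
    then have "u \<circ> of_discrete \<in> bcontfun"
      using that bounded_subset open_discrete
      by (auto simp: bcontfun_def continuous_on_open_invariant)
    then show ?thesis
      by (auto simp: lift_def unlift_def Bcontfun_inverse discrete_inverse)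
  qed
  define T where "T f = lift (G (unlift f))" for f
  have unlift_T: "unlift (T f) = G (unlift f)" for f
    unfolding T_def using bounded by (rule unlift_lift)
  have "dist (T f) (T g) \<le> q * dist f g" for f g
  proof (rule dist_bound)
    fix z
    have "dist (unlift f y) (unlift g y) \<le> dist f g" for y
      unfolding unlift_def by (simp add: dist_bounded)
    then have "dist (unlift (T f) x) (unlift (T g) x) \<le> q * dist f g" for x
      unfolding unlift_T by (rule contraction)
    from this[of "of_discrete z"] show "dist (T f z) (T g z) \<le> q * dist f g"
      by (simp add: unlift_def of_discrete_inverse)
  qed
  then obtain f where fix_T: "T f = f" and unique_T: "\<And>g. T g = g \<Longrightarrow> g = f"
    using banach_fix_type[OF assms(1,2), of T] by blast
  show ?thesis
  proof
    show "G (unlift f) = unlift f" by (metis unlift_T fix_T)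
  next
    fix u assume "G u = u"
    then have "T (lift u) = lift u"
      by (metis T_def bounded unlift_lift)
    then show "u = unlift f"
      by (metis \<open>G u = u\<close> bounded unlift_lift unique_T)
  qed
qed

lemma cubic_diff:
  fixes c x y :: real
  shows "(c * x + x ^ 3) - (c * y + y ^ 3) = (x - y) * (c + (x\<^sup>2 + x * y + y\<^sup>2))"
  by (simp add: algebra_simps power2_eq_square power3_eq_cube)

lemma cubic_dist_lower:
  fixes c x y :: real
  assumes "c \<ge> 0"
  shows "c * \<bar>x - y\<bar> \<le> \<bar>(c * x + x ^ 3) - (c * y + y ^ 3)\<bar>"
proof -
  have "x\<^sup>2 + x * y + y\<^sup>2 = (x + y / 2)\<^sup>2 + 3 / 4 * y\<^sup>2"
    by (simp add: algebra_simps power2_eq_square)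
  then have "x\<^sup>2 + x * y + y\<^sup>2 \<ge> 0" by simp
  then have "\<bar>(c * x + x ^ 3) - (c * y + y ^ 3)\<bar> = \<bar>x - y\<bar> * (c + (x\<^sup>2 + x * y + y\<^sup>2))"
    using assms by (simp add: cubic_diff abs_mult)
  also have "\<dots> \<ge> \<bar>x - y\<bar> * c"
    using \<open>x\<^sup>2 + x * y + y\<^sup>2 \<ge> 0\<close> by (intro mult_left_mono) auto
  finally show ?thesis by (simp add: mult.commute)
qed

lemma cubic_surj:
  fixes c y :: real
  assumes "c \<ge> 0"
  shows "\<exists>x. c * x + x ^ 3 = y"
proof -
  define x0 where "x0 = \<bar>y\<bar> + 1"
  have "\<bar>y\<bar> \<le> x0" "x0 \<le> x0 ^ 3" "0 \<le> c * x0" "- x0 \<le> x0"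
    using power_increasing[of 1 3 x0] assms by (simp_all add: x0_def)
  then have "c * (- x0) + (- x0) ^ 3 \<le> y" "y \<le> c * x0 + x0 ^ 3"
    by (simp_all add: abs_le_iff)
  moreover have "continuous_on {- x0..x0} (\<lambda>x. c * x + x ^ 3)"
    by (intro continuous_intros)
  ultimately show ?thesis
    using IVT'[of "\<lambda>x. c * x + x ^ 3" "- x0" y x0] \<open>- x0 \<le> x0\<close> by blast
qed

lemma cubic_inj:
  fixes c x y :: real
  assumes "c > 0" "c * x + x ^ 3 = c * y + y ^ 3"
  shows "x = y"
  using cubic_dist_lower[of c x y] assms by (simp add: mult_le_0_iff)

definition cubic_inv :: "real \<Rightarrow> real \<Rightarrow> real" where
  "cubic_inv c y = (THE x. c * x + x ^ 3 = y)"

lemma cubic_inv_eq_iff: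
  assumes "c > 0"
  shows "cubic_inv c y = x \<longleftrightarrow> c * x + x ^ 3 = y"
proof -
  have unique: "\<exists>!x. c * x + x ^ 3 = y"
    using cubic_surj[of c y] cubic_inj[OF assms] assms by (metis less_imp_le)
  show ?thesis
  proof
    assume "cubic_inv c y = x"
    then show "c * x + x ^ 3 = y"
      using theI'[OF unique] unfolding cubic_inv_def by simp
  next
    assume "c * x + x ^ 3 = y"
    then show "cubic_inv c y = x"
      unfolding cubic_inv_def by (rule the1_equality[OF unique])
  qed
qed

lemma cubic_inv_lipschitz:
  assumes "c > 0"
  shows "\<bar>cubic_inv c y - cubic_inv c z\<bar> \<le> \<bar>y - z\<bar> / c"
proof -
  have "c * cubic_inv c w + cubic_inv c w ^ 3 = w" for w
    using cubic_inv_eq_iff[OF assms, THEN iffD1, OF refl] .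
  then show ?thesis
    using cubic_dist_lower[of c "cubic_inv c y" "cubic_inv c z"] assms
    by (simp add: pos_le_divide_eq mult.commute)
qed

definition neighbour_sum :: "nat \<Rightarrow> gridfun \<Rightarrow> gridfun" where
  "neighbour_sum M u = (\<lambda>(i, j). u ((i + 1) mod M, j) + u ((i + M - 1) mod M, j)
     + u (i, (j + 1) mod M) + u (i, (j + M - 1) mod M))"

lemma lap_h_eq_neighbour_sum:
  "p \<in> grid M \<Longrightarrow> lap_h M h u p = (neighbour_sum M u p - 4 * u p) / h\<^sup>2"
  unfolding lap_h_def neighbour_sum_def grid_def by (cases p) auto

lemma neighbour_sum_dist_le:
  assumes "\<And>q. \<bar>u q - w q\<bar> \<le> d"
  shows "\<bar>neighbour_sum M u p - neighbour_sum M w p\<bar> \<le> 4 * d"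
  using assms[of "((fst p + 1) mod M, snd p)"] assms[of "((fst p + M - 1) mod M, snd p)"]
    assms[of "(fst p, (snd p + 1) mod M)"] assms[of "(fst p, (snd p + M - 1) mod M)"]
  unfolding neighbour_sum_def by (cases p) (auto simp: abs_le_iff)

lemma bounded_range_Vh: "u \<in> Vh M \<Longrightarrow> bounded (range u)"
proof -
  assume "u \<in> Vh M"
  then have "range u \<subseteq> insert 0 (u ` grid M)"
    unfolding Vh_def by blast
  moreover have "finite (grid M)"
    unfolding grid_def by simp
  ultimately show ?thesis
    by (meson bounded_subset finite_imageI finite_imp_bounded finite_insert)
qed

lemma grid_cubic_system_unique_solution:
  fixes c k :: real and \<beta> :: gridfun
  assumes "c > 0" "k \<ge> 0"
  shows "\<exists>!v. v \<in> Vh M \<and>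
    (\<forall>p\<in>grid M. (c + 4 * k) * v p + v p ^ 3 = \<beta> p + k * neighbour_sum M v p)"
proof -
  have "c + 4 * k > 0" using assms by simp
  define G where "G v = (\<lambda>p. if p \<in> grid M
      then cubic_inv (c + 4 * k) (\<beta> p + k * neighbour_sum M v p) else 0)" for v
  define q where "q = 4 * k / (c + 4 * k)"
  have solution_iff_fixpoint: "v \<in> Vh M \<and>
      (\<forall>p\<in>grid M. (c + 4 * k) * v p + v p ^ 3 = \<beta> p + k * neighbour_sum M v p)
      \<longleftrightarrow> G v = v" for v
    unfolding G_def Vh_def fun_eq_iff
    by (auto simp: cubic_inv_eq_iff[OF \<open>c + 4 * k > 0\<close>])
  have "0 \<le> q" "q < 1"
    using assms by (simp_all add: q_def field_simps)
  moreover have "bounded (range (G v))" for v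
    by (rule bounded_range_Vh[of _ M]) (simp add: G_def Vh_def)
  moreover have "dist (G u p) (G w p) \<le> q * d"
    if "\<And>p'. dist (u p') (w p') \<le> d" for u w d p
  proof -
    have "0 \<le> d" using that[of p] zero_le_dist order_trans by blast
    have "\<bar>cubic_inv (c + 4 * k) (\<beta> p + k * neighbour_sum M u p)
        - cubic_inv (c + 4 * k) (\<beta> p + k * neighbour_sum M w p)\<bar>
        \<le> k * \<bar>neighbour_sum M u p - neighbour_sum M w p\<bar> / (c + 4 * k)"
      using cubic_inv_lipschitz[OF \<open>c + 4 * k > 0\<close>,
          of "\<beta> p + k * neighbour_sum M u p" "\<beta> p + k * neighbour_sum M w p"] assms(2)
      by (simp add: abs_mult right_diff_distrib[symmetric])
    also have "\<dots> \<le> k * (4 * d) / (c + 4 * k)"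
      using neighbour_sum_dist_le[of u w d M p] that assms \<open>c + 4 * k > 0\<close>
      by (intro divide_right_mono mult_left_mono) (auto simp: dist_real_def)
    also have "\<dots> = q * d"
      by (simp add: q_def)
    finally show ?thesis
      using \<open>0 \<le> q\<close> \<open>0 \<le> d\<close> by (simp add: G_def dist_real_def)
  qed
  ultimately have "\<exists>!v. G v = v"
    by (rule bounded_sup_contraction_unique_fixpoint)
  then show ?thesis
    unfolding solution_iff_fixpoint .
qed

lemma D2_eq_affine:
  "D2 t n v us p = (1 + 2 * ratio t n) / (tau t n * (1 + ratio t n)) * v p + D2 t n (\<lambda>_. 0) us p"
  unfolding D2_def ratio_def by (simp add: diff_divide_distrib right_diff_distrib)

lemma ratio_nonneg:
  assumes "\<And>k. 1 \<le> k \<Longrightarrow> k \<le> n \<Longrightarrow> t (k - 1) < t k"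
  shows "0 \<le> ratio t n"
proof (cases "n \<le> 1")
  case False
  then have "0 < tau t n" "0 < tau t (n - 1)"
    using assms[of n] assms[of "n - 1"] by (simp_all add: tau_def)
  then show ?thesis
    by (simp add: ratio_def)
qed (simp add: ratio_def)

lemma bdf2_coeff_gt_one:
  fixes \<tau> r :: real
  assumes "\<tau> > 0" "r \<ge> 0" "\<tau> < (1 + 2 * r) / (1 + r)"
  shows "(1 + 2 * r) / (\<tau> * (1 + r)) > 1"
proof -
  have "\<tau> * (1 + r) < 1 + 2 * r"
    using assms by (simp add: pos_less_divide_eq)
  moreover have "0 < \<tau> * (1 + r)"
    using assms by simp
  ultimately show ?thesis
    by (simp add: less_divide_eq_1_pos)
qed

theorem lemma3p2:
  fixes L \<epsilon> T :: real and M N :: nat and t :: "nat \<Rightarrow> real"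
  assumes "L > 0" and "M > 0" and "\<epsilon> > 0"
    and "t 0 = 0" and "t N = T"
    and "\<And>k. 1 \<le> k \<Longrightarrow> k \<le> N \<Longrightarrow> t (k - 1) < t k"
    and "\<And>n. 1 \<le> n \<Longrightarrow> n \<le> N \<Longrightarrow>
           tau t n < (1 + 2 * ratio t n) / (1 + ratio t n)"
  shows "\<forall>n us. 1 \<le> n \<and> n \<le> N \<and> (\<forall>k<n. us k \<in> Vh M) \<longrightarrow>
           (\<exists>!v. v \<in> Vh M \<and>
              (\<forall>p\<in>grid M. D2 t n v us p
                 = \<epsilon>\<^sup>2 * lap_h M (L / real M) v p - f_AC (v p)))"
proof (intro allI impI)
  fix n us
  assume "1 \<le> n \<and> n \<le> N \<and> (\<forall>k<n. us k \<in> Vh M)"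
  then have steps: "\<And>k. 1 \<le> k \<Longrightarrow> k \<le> n \<Longrightarrow> t (k - 1) < t k" and "1 \<le> n" "n \<le> N"
    using assms(6) by auto
  define a where "a = (1 + 2 * ratio t n) / (tau t n * (1 + ratio t n))"
  define k where "k = \<epsilon>\<^sup>2 / (L / real M)\<^sup>2"
  define \<beta> where "\<beta> p = - D2 t n (\<lambda>_. 0) us p" for p
  have "0 < tau t n"
    using steps[of n] \<open>1 \<le> n\<close> by (simp add: tau_def)
  then have "a > 1"
    unfolding a_def using \<open>1 \<le> n\<close> \<open>n \<le> N\<close>
    by (intro bdf2_coeff_gt_one ratio_nonneg steps assms(7))
  have "D2 t n v us p = \<epsilon>\<^sup>2 * lap_h M (L / real M) v p - f_AC (v p) \<longleftrightarrow>
      (a - 1 + 4 * k) * v p + v p ^ 3 = \<beta> p + k * neighbour_sum M v p"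
    if "p \<in> grid M" for v p
    unfolding D2_eq_affine[of t n v] lap_h_eq_neighbour_sum[OF that] a_def[symmetric]
      \<beta>_def k_def f_AC_def
    by (auto simp: algebra_simps diff_divide_distrib)
  then show "\<exists>!v. v \<in> Vh M \<and>
      (\<forall>p\<in>grid M. D2 t n v us p = \<epsilon>\<^sup>2 * lap_h M (L / real M) v p - f_AC (v p))"
    using grid_cubic_system_unique_solution[of "a - 1" k M \<beta>] \<open>a > 1\<close>
    by (simp add: k_def cong: conj_cong)
qed

end
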